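(* Let $\mathcal P$ be a Fitting program over a bilattice $\mathcal B$ and $\alpha\in\{\mathcal F,\mathcal T,\mathcal U,\mathcal I\}$. Then $Fix^{\alpha}_{\mathcal U}=Fix^{\alpha}_{\mathcal F}\otimes Fix^{\alpha}_{\mathcal T}$, $Fix^{\alpha}_{\mathcal I}=Fix^{\alpha}_{\mathcal F}\oplus Fix^{\alpha}_{\mathcal T}$, $Fix^{\alpha}_{\mathcal F}=Fix^{\alpha}_{\mathcal U}\wedge Fix^{\alpha}_{\mathcal I}$, $Fix^{\alpha}_{\mathcal T}=Fix^{\alpha}_{\mathcal U}\vee Fix^{\alpha}_{\mathcal I}$.
   Context: A bilattice $\langle\mathcal B,\le_t,\le_k\rangle$ is a nonempty set with two partial orders, each making $\mathcal B$ a lattice with top and bottom. Under $\le_t$, meet and join are $\wedge,\vee$ (infinitary $\bigwedge,\bigvee$), bottom $\mathcal F$, top $\mathcal T$; under $\le_k$, meet and join are $\otimes,\oplus$ (infinitary $\bigotimes,\bigoplus$), bottom $\mathcal U$, top $\mathcal I$. Standing assumptions: $\mathcal B$ is complete for both orders, infinitely distributive (all finitary and infinitary distributive laws among the four operations hold), satisfies the infinitary interlacing conditions (each of $\wedge,\vee,\otimes,\oplus$ and their infinitary versions is monotone w.r.t. both orderings), and has a negation $\neg$ (an involution reversing $\le_t$ and preserving $\le_k$). A formula is built from literals ($A$ or $\neg A$) and elements of $\mathcal B$ using $\wedge,\vee,\otimes,\oplus,\exists,\forall$ (with built-in predicate $equal$). A clause is $P(x_1,\dots,x_n)\leftarrow\phi(x_1,\dots,x_n)$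 with the body's free variables among $x_1,\dots,x_n$. A Fitting program is a finite set of clauses with no predicate letter heading more than one clause; Inst-$\mathcal P$ is its set of ground instances. $\mathcal V(\mathcal B)$: maps from ground atoms to $\mathcal B$ with pointwise orders/operations. Valuations extend to closed formulas compositionally ($v(\beta)=\beta$, connectives pointwise, $\exists$ as $\bigvee$, $\forall$ as $\bigwedge$ over closed-term instances, $v(equal(s,t))=\mathcal T$ if $s=t$ else $\mathcal F$). The contrajoin $v\bigtriangleup w$ evaluates likewise but gives $A$ the value $v(A)$ and $\neg A$ the value $\neg w(A)$. $\Psi_{\mathcal P}^{\alpha}(v,w)(A)=\alpha$ if $A$ heads no member of Inst-$\mathcal P$, and $=(v\bigtriangleup w)(B)$ if $A\leftarrow B\in$ Inst-$\mathcal P$. $\Psi'^{\alpha}_{\mathcal P}(v)$ is the $\le_t$-least (resp. $\le_t$-greatest, $\le_k$-least, $\le_k$-greatest) fixpoint of $x\mapsto\Psi_{\mathcal P}^{\alpha}(x,v)$ when $\alpha=\mathcal F$ (resp. $\mathcal T,\mathcal U,\mathcal I$), obtained as the limit of the transfinite iteration from the constant valuation $\alpha$. $Fix^{\alpha}_{\mathcal U}$ and $Fix^{\alpha}_{\mathcal I}$ are the $\le_k$-least and $\le_k$-greatest fixpoints of $\Psi'^{\alpha}_{\mathcal P}$ (which is $\le_k$-monotone). $Fix^{\alpha}_{\mathcal F}$ and $Fix^{\alpha}_{\mathcal T}$ are the extreme oscillation points of the $\le_t$-anti-monotone map $\Psi'^{\alpha}_{\mathcal P}$ on $(\mathcal V(\mathcal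 B),\le_t)$, i.e. the $\le_t$-least and $\le_t$-greatest fixpoints of $\Psi'^{\alpha}_{\mathcal P}\circ\Psi'^{\alpha}_{\mathcal P}$. *)

theory Defs
  imports Main
begin

text \<open>The truth order \<le>t is the type's own order (a complete lattice: inf/sup are
  the binary meet/join, Inf/Sup the infinitary ones, bot = F, top = T).
  The knowledge order \<le>k is the parameter kle, with binary meet/join
  kmeet/kjoin (otimes/oplus) and infinitary kInf/kSup; neg is the negation.\<close>

class complete_interlaced_bilattice = complete_lattice +
  fixes kle :: "'a \<Rightarrow> 'a \<Rightarrow> bool"
    and kmeet :: "'a \<Rightarrow> 'a \<Rightarrow> 'a"
    and kjoin :: "'a \<Rightarrow> 'a \<Rightarrow> 'a"
    and kInf :: "'a set \<Rightarrow> 'a"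
    and kSup :: "'a set \<Rightarrow> 'a"
    and neg :: "'a \<Rightarrow> 'a"
  assumes kle_refl: "kle x x"
    and kle_trans: "kle x y \<Longrightarrow> kle y z \<Longrightarrow> kle x z"
    and kle_antisym: "kle x y \<Longrightarrow> kle y x \<Longrightarrow> x = y"
    and kmeet_lower1: "kle (kmeet x y) x"
    and kmeet_lower2: "kle (kmeet x y) y"
    and kmeet_greatest: "kle z x \<Longrightarrow> kle z y \<Longrightarrow> kle z (kmeet x y)"
    and kjoin_upper1: "kle x (kjoin x y)"
    and kjoin_upper2: "kle y (kjoin x y)"
    and kjoin_least: "kle x z \<Longrightarrow> kle y z \<Longrightarrow> kle (kjoin x y) z"
    and kInf_lower: "x \<in> S \<Longrightarrow> kle (kInf S) x"
    and kInf_greatest: "(\<And>x. x \<in> S \<Longrightarrow> kle z x) \<Longrightarrow> kle z (kInf S)"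
    and kSup_upper: "x \<in> S \<Longrightarrow> kle x (kSup S)"
    and kSup_least: "(\<And>x. x \<in> S \<Longrightarrow> kle x z) \<Longrightarrow> kle (kSup S) z"
    and inf_sup_distr: "inf x (sup y z) = sup (inf x y) (inf x z)"
    and inf_kmeet_distr: "inf x (kmeet y z) = kmeet (inf x y) (inf x z)"
    and inf_kjoin_distr: "inf x (kjoin y z) = kjoin (inf x y) (inf x z)"
    and sup_inf_distr: "sup x (inf y z) = inf (sup x y) (sup x z)"
    and sup_kmeet_distr: "sup x (kmeet y z) = kmeet (sup x y) (sup x z)"
    and sup_kjoin_distr: "sup x (kjoin y z) = kjoin (sup x y) (sup x z)"
    and kmeet_inf_distr: "kmeet x (inf y z) = inf (kmeet x y) (kmeet x z)"
    and kmeet_sup_distr: "kmeet x (sup y z) = sup (kmeet x y) (kmeet x z)"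
    and kmeet_kjoin_distr: "kmeet x (kjoin y z) = kjoin (kmeet x y) (kmeet x z)"
    and kjoin_inf_distr: "kjoin x (inf y z) = inf (kjoin x y) (kjoin x z)"
    and kjoin_sup_distr: "kjoin x (sup y z) = sup (kjoin x y) (kjoin x z)"
    and kjoin_kmeet_distr: "kjoin x (kmeet y z) = kmeet (kjoin x y) (kjoin x z)"
    and inf_Sup_distr: "S \<noteq> {} \<Longrightarrow> inf x (Sup S) = Sup (inf x ` S)"
    and inf_kInf_distr: "S \<noteq> {} \<Longrightarrow> inf x (kInf S) = kInf (inf x ` S)"
    and inf_kSup_distr: "S \<noteq> {} \<Longrightarrow> inf x (kSup S) = kSup (inf x ` S)"
    and sup_Inf_distr: "S \<noteq> {} \<Longrightarrow> sup x (Inf S) = Inf (sup x ` S)"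
    and sup_kInf_distr: "S \<noteq> {} \<Longrightarrow> sup x (kInf S) = kInf (sup x ` S)"
    and sup_kSup_distr: "S \<noteq> {} \<Longrightarrow> sup x (kSup S) = kSup (sup x ` S)"
    and kmeet_Inf_distr: "S \<noteq> {} \<Longrightarrow> kmeet x (Inf S) = Inf (kmeet x ` S)"
    and kmeet_Sup_distr: "S \<noteq> {} \<Longrightarrow> kmeet x (Sup S) = Sup (kmeet x ` S)"
    and kmeet_kSup_distr: "S \<noteq> {} \<Longrightarrow> kmeet x (kSup S) = kSup (kmeet x ` S)"
    and kjoin_Inf_distr: "S \<noteq> {} \<Longrightarrow> kjoin x (Inf S) = Inf (kjoin x ` S)"
    and kjoin_Sup_distr: "S \<noteq> {} \<Longrightarrow> kjoin x (Sup S) = Sup (kjoin x ` S)"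
    and kjoin_kInf_distr: "S \<noteq> {} \<Longrightarrow> kjoin x (kInf S) = kInf (kjoin x ` S)"
    (* interlacing: every operation is monotone w.r.t. both orders
       (the remaining cases hold automatically by the lattice laws) *)
    and inf_kmono: "kle x x' \<Longrightarrow> kle y y' \<Longrightarrow> kle (inf x y) (inf x' y')"
    and sup_kmono: "kle x x' \<Longrightarrow> kle y y' \<Longrightarrow> kle (sup x y) (sup x' y')"
    and kmeet_tmono: "x \<le> x' \<Longrightarrow> y \<le> y' \<Longrightarrow> kmeet x y \<le> kmeet x' y'"
    and kjoin_tmono: "x \<le> x' \<Longrightarrow> y \<le> y' \<Longrightarrow> kjoin x y \<le> kjoin x' y'"
    and Inf_kmono: "(\<And>i. i \<in> I \<Longrightarrow> kle (f i) (g i)) \<Longrightarrow> kle (Inf (f ` I)) (Inf (g ` I))"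
    and Sup_kmono: "(\<And>i. i \<in> I \<Longrightarrow> kle (f i) (g i)) \<Longrightarrow> kle (Sup (f ` I)) (Sup (g ` I))"
    and kInf_tmono: "(\<And>i. i \<in> I \<Longrightarrow> f i \<le> g i) \<Longrightarrow> kInf (f ` I) \<le> kInf (g ` I)"
    and kSup_tmono: "(\<And>i. i \<in> I \<Longrightarrow> f i \<le> g i) \<Longrightarrow> kSup (f ` I) \<le> kSup (g ` I)"
    and neg_neg: "neg (neg x) = x"
    and neg_tanti: "x \<le> y \<Longrightarrow> neg y \<le> neg x"
    and neg_kmono: "kle x y \<Longrightarrow> kle (neg x) (neg y)"

definition bF :: "'b::complete_interlaced_bilattice" where "bF = bot"
definition bT :: "'b::complete_interlaced_bilattice" where "bT = top"
definition bU :: "'b::complete_interlaced_bilattice" where "bU = kInf UNIV"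
definition bI :: "'b::complete_interlaced_bilattice" where "bI = kSup UNIV"

datatype mode = mF | mT | mU | mI

fun mode_val :: "mode \<Rightarrow> 'b::complete_interlaced_bilattice" where
  "mode_val mF = bF" | "mode_val mT = bT" | "mode_val mU = bU" | "mode_val mI = bI"

datatype 'f trm = Var nat | Fn 'f "'f trm list"

text \<open>Closed terms (elements of the Herbrand universe).\<close>
datatype 'f gtrm = GFn 'f "'f gtrm list"

fun ground :: "(nat \<Rightarrow> 'f gtrm) \<Rightarrow> 'f trm \<Rightarrow> 'f gtrm" where
  "ground \<sigma> (Var n) = \<sigma> n"
| "ground \<sigma> (Fn f ts) = GFn f (map (ground \<sigma>) ts)"

fun tvars :: "'f trm \<Rightarrow> nat set" where
  "tvars (Var n) = {n}"
| "tvars (Fn f ts) = (\<Union>t\<in>set ts. tvars t)"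

datatype ('p, 'f, 'b) fmla =
    FPos 'p "'f trm list"
  | FNeg 'p "'f trm list"
  | FEq "'f trm" "'f trm"          (* built-in atom equal(s,t) *)
  | FNEq "'f trm" "'f trm"
  | FConst 'b
  | FAnd "('p, 'f, 'b) fmla" "('p, 'f, 'b) fmla"
  | FOr "('p, 'f, 'b) fmla" "('p, 'f, 'b) fmla"
  | FOtimes "('p, 'f, 'b) fmla" "('p, 'f, 'b) fmla"
  | FOplus "('p, 'f, 'b) fmla" "('p, 'f, 'b) fmla"
  | FEx nat "('p, 'f, 'b) fmla"
  | FAll nat "('p, 'f, 'b) fmla"

fun fvars :: "('p, 'f, 'b) fmla \<Rightarrow> nat set" where
  "fvars (FPos p ts) = (\<Union>t\<in>set ts. tvars t)"
| "fvars (FNeg p ts) = (\<Union>t\<in>set ts. tvars t)"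
| "fvars (FEq s t) = tvars s \<union> tvars t"
| "fvars (FNEq s t) = tvars s \<union> tvars t"
| "fvars (FConst b) = {}"
| "fvars (FAnd a b) = fvars a \<union> fvars b"
| "fvars (FOr a b) = fvars a \<union> fvars b"
| "fvars (FOtimes a b) = fvars a \<union> fvars b"
| "fvars (FOplus a b) = fvars a \<union> fvars b"
| "fvars (FEx x a) = fvars a - {x}"
| "fvars (FAll x a) = fvars a - {x}"

text \<open>A clause P(x1,...,xn) \<leftarrow> body is (P, [x1,...,xn], body).\<close>
type_synonym ('p, 'f, 'b) clause = "'p \<times> nat list \<times> ('p, 'f, 'b) fmla"

definition fitting_program :: "('p, 'f, 'b) clause set \<Rightarrow> bool" where
  "fitting_program P \<longleftrightarrow> finite P
     \<and> (\<forall>(p, xs, \<phi>) \<in> P. distinct xs \<and> fvars \<phi> \<subseteq> set xs)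
     \<and> (\<forall>c1\<in>P. \<forall>c2\<in>P. fst c1 = fst c2 \<longrightarrow> c1 = c2)"

type_synonym ('p, 'f) gatom = "'p \<times> 'f gtrm list"
type_synonym ('p, 'f, 'b) valuation = "('p, 'f) gatom \<Rightarrow> 'b"

text \<open>Contrajoin evaluation (v \<triangle> w) of the closed formula obtained by
  instantiating the free variables of a formula according to \<sigma>: positive atoms
  are evaluated in v, negated atoms via w.  The ordinary valuation is ev v v.\<close>
fun cev :: "('p, 'f, 'b::complete_interlaced_bilattice) valuation \<Rightarrow> ('p, 'f, 'b) valuation
             \<Rightarrow> (nat \<Rightarrow> 'f gtrm) \<Rightarrow> ('p, 'f, 'b) fmla \<Rightarrow> 'b" where
  "cev v w \<sigma> (FPos p ts) = v (p, map (ground \<sigma>) ts)"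
| "cev v w \<sigma> (FNeg p ts) = neg (w (p, map (ground \<sigma>) ts))"
| "cev v w \<sigma> (FEq s t) = (if ground \<sigma> s = ground \<sigma> t then bT else bF)"
| "cev v w \<sigma> (FNEq s t) = neg (if ground \<sigma> s = ground \<sigma> t then bT else bF)"
| "cev v w \<sigma> (FConst b) = b"
| "cev v w \<sigma> (FAnd a b) = inf (cev v w \<sigma> a) (cev v w \<sigma> b)"
| "cev v w \<sigma> (FOr a b) = sup (cev v w \<sigma> a) (cev v w \<sigma> b)"
| "cev v w \<sigma> (FOtimes a b) = kmeet (cev v w \<sigma> a) (cev v w \<sigma> b)"
| "cev v w \<sigma> (FOplus a b) = kjoin (cev v w \<sigma> a) (cev v w \<sigma> b)"
| "cev v w \<sigma> (FEx x a) = Sup (range (\<lambda>g. cev v w (\<sigma>(x := g)) a))"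
| "cev v w \<sigma> (FAll x a) = Inf (range (\<lambda>g. cev v w (\<sigma>(x := g)) a))"

text \<open>Ground instances: (A, (body, \<sigma>)) stands for the ground clause
  A \<leftarrow> body\<sigma>, where \<sigma> assigns closed terms to the variables.\<close>
definition inst_prog :: "('p, 'f, 'b) clause set
    \<Rightarrow> (('p, 'f) gatom \<times> (('p, 'f, 'b) fmla \<times> (nat \<Rightarrow> 'f gtrm))) set" where
  "inst_prog P = {((p, map \<sigma> xs), (\<phi>, \<sigma>)) | p xs \<phi> \<sigma>. (p, xs, \<phi>) \<in> P}"

definition Psi :: "('p, 'f, 'b::complete_interlaced_bilattice) clause set \<Rightarrow> mode
    \<Rightarrow> ('p, 'f, 'b) valuation \<Rightarrow> ('p, 'f, 'b) valuation \<Rightarrow> ('p, 'f, 'b) valuation" where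
  "Psi P m v w A =
     (if \<exists>B. (A, B) \<in> inst_prog P
      then (let (\<phi>, \<sigma>) = (SOME B. (A, B) \<in> inst_prog P) in cev v w \<sigma> \<phi>)
      else mode_val m)"

text \<open>Pointwise knowledge order and pointwise otimes / oplus on valuations
  (pointwise \<le>t, \<and>, \<or> are the library's order, inf and sup on functions).\<close>
definition vkle :: "('a \<Rightarrow> 'b::complete_interlaced_bilattice) \<Rightarrow> ('a \<Rightarrow> 'b) \<Rightarrow> bool" where
  "vkle v w \<longleftrightarrow> (\<forall>A. kle (v A) (w A))"

definition vkmeet :: "('a \<Rightarrow> 'b::complete_interlaced_bilattice) \<Rightarrow> ('a \<Rightarrow> 'b) \<Rightarrow> 'a \<Rightarrow> 'b" where
  "vkmeet v w = (\<lambda>A. kmeet (v A) (w A))"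

definition vkjoin :: "('a \<Rightarrow> 'b::complete_interlaced_bilattice) \<Rightarrow> ('a \<Rightarrow> 'b) \<Rightarrow> 'a \<Rightarrow> 'b" where
  "vkjoin v w = (\<lambda>A. kjoin (v A) (w A))"

definition least_fp :: "('a \<Rightarrow> 'a \<Rightarrow> bool) \<Rightarrow> ('a \<Rightarrow> 'a) \<Rightarrow> 'a" where
  "least_fp R f = (THE x. f x = x \<and> (\<forall>y. f y = y \<longrightarrow> R x y))"

definition greatest_fp :: "('a \<Rightarrow> 'a \<Rightarrow> bool) \<Rightarrow> ('a \<Rightarrow> 'a) \<Rightarrow> 'a" where
  "greatest_fp R f = (THE x. f x = x \<and> (\<forall>y. f y = y \<longrightarrow> R y x))"

fun Psi' :: "('p, 'f, 'b::complete_interlaced_bilattice) clause set \<Rightarrow> mode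
    \<Rightarrow> ('p, 'f, 'b) valuation \<Rightarrow> ('p, 'f, 'b) valuation" where
  "Psi' P mF v = least_fp (\<le>) (\<lambda>x. Psi P mF x v)"
| "Psi' P mT v = greatest_fp (\<le>) (\<lambda>x. Psi P mT x v)"
| "Psi' P mU v = least_fp vkle (\<lambda>x. Psi P mU x v)"
| "Psi' P mI v = greatest_fp vkle (\<lambda>x. Psi P mI x v)"

definition FixU :: "('p, 'f, 'b::complete_interlaced_bilattice) clause set \<Rightarrow> mode \<Rightarrow> ('p, 'f, 'b) valuation" where
  "FixU P m = least_fp vkle (Psi' P m)"

definition FixI :: "('p, 'f, 'b::complete_interlaced_bilattice) clause set \<Rightarrow> mode \<Rightarrow> ('p, 'f, 'b) valuation" where
  "FixI P m = greatest_fp vkle (Psi' P m)"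

definition FixF :: "('p, 'f, 'b::complete_interlaced_bilattice) clause set \<Rightarrow> mode \<Rightarrow> ('p, 'f, 'b) valuation" where
  "FixF P m = least_fp (\<le>) (Psi' P m \<circ> Psi' P m)"

definition FixT :: "('p, 'f, 'b::complete_interlaced_bilattice) clause set \<Rightarrow> mode \<Rightarrow> ('p, 'f, 'b) valuation" where
  "FixT P m = greatest_fp (\<le>) (Psi' P m \<circ> Psi' P m)"

end

theory Submission
  imports Defs
begin

(* Valuations form a complete interlaced bilattice pointwise, and on it f = Psi' P m is monotone
   for the knowledge order and antitone for the truth order, by parallel fixpoint induction along
   the construction of Psi'.  For such an f on any complete interlaced bilattice, f swaps the
   t-least and t-greatest fixpoints a <= b of f o f, and every fixpoint of f lies in the t-interval
   [a, b].  Interlacing and distributivity put kmeet a b k-below and kjoin a b k-above every element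
   of that interval; both are fixpoints of f, so they are its k-least and k-greatest fixpoints, and
   a, b are recovered as their t-meet and t-join. *)

(* Sets of pairs stand for families over an arbitrary index type, see preserves_relD. *)
definition preserves_rel :: "('a set \<Rightarrow> 'a) \<Rightarrow> ('a \<Rightarrow> 'a \<Rightarrow> bool) \<Rightarrow> bool" where
  "preserves_rel S R \<longleftrightarrow> (\<forall>M. (\<forall>p\<in>M. R (fst p) (snd p)) \<longrightarrow> R (S (fst ` M)) (S (snd ` M)))"

lemma preserves_relD:
  assumes "preserves_rel S R" and "\<And>i. i \<in> I \<Longrightarrow> R (F i) (G i)"
  shows "R (S (F ` I)) (S (G ` I))"
proof -
  have "R (S (fst ` (\<lambda>i. (F i, G i)) ` I)) (S (snd ` (\<lambda>i. (F i, G i)) ` I))"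
    using assms unfolding preserves_rel_def by auto
  then show ?thesis by (simp add: image_image)
qed

lemma least_fp_eqI:
  assumes "f x = x" and "\<And>y. f y = y \<Longrightarrow> R x y" and "\<And>x y. R x y \<Longrightarrow> R y x \<Longrightarrow> x = y"
  shows "least_fp R f = x"
  unfolding least_fp_def by (rule the_equality) (use assms in auto)

lemma greatest_fp_eq_least_fp: "greatest_fp R f = least_fp (\<lambda>x y. R y x) f"
  by (simp add: greatest_fp_def least_fp_def)

definition rel_lfp :: "('a \<Rightarrow> 'a \<Rightarrow> bool) \<Rightarrow> ('a set \<Rightarrow> 'a) \<Rightarrow> ('a \<Rightarrow> 'a) \<Rightarrow> 'a" where
  "rel_lfp le Inf' f = Inf' {x. le (f x) x}"

locale rel_complete_lattice =
  fixes le :: "'a \<Rightarrow> 'a \<Rightarrow> bool" and Inf' :: "'a set \<Rightarrow> 'a" and Sup' :: "'a set \<Rightarrow> 'a"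
  assumes refl: "le x x" and trans: "le x y \<Longrightarrow> le y z \<Longrightarrow> le x z"
    and antisym: "le x y \<Longrightarrow> le y x \<Longrightarrow> x = y"
    and Inf_lower: "x \<in> S \<Longrightarrow> le (Inf' S) x"
    and Inf_greatest: "(\<And>x. x \<in> S \<Longrightarrow> le z x) \<Longrightarrow> le z (Inf' S)"
    and Sup_upper: "x \<in> S \<Longrightarrow> le x (Sup' S)"
    and Sup_least: "(\<And>x. x \<in> S \<Longrightarrow> le x z) \<Longrightarrow> le (Sup' S) z"
begin

lemma Sup_singleton: "Sup' {a} = a"
  by (rule antisym) (auto intro: Sup_least Sup_upper refl)

lemma Sup_UNION: "Sup' (\<Union>a\<in>A. B a) = Sup' ((\<lambda>a. Sup' (B a)) ` A)"
proof (rule antisym)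
  show "le (Sup' (\<Union>a\<in>A. B a)) (Sup' ((\<lambda>a. Sup' (B a)) ` A))"
    by (rule Sup_least) (blast intro: trans Sup_upper)
  show "le (Sup' ((\<lambda>a. Sup' (B a)) ` A)) (Sup' (\<Union>a\<in>A. B a))"
    by (rule Sup_least) (blast intro: Sup_least Sup_upper)
qed

lemma preserves_rel_Sup_le: "preserves_rel Sup' le"
  unfolding preserves_rel_def
proof (intro allI impI Sup_least)
  fix M x assume M: "\<forall>p\<in>M. le (fst p) (snd p)" and "x \<in> fst ` M"
  then obtain p where p: "p \<in> M" "x = fst p" by blast
  then have "le (snd p) (Sup' (snd ` M))" by (intro Sup_upper) simp
  with M p show "le x (Sup' (snd ` M))" by (blast intro: trans)
qed

lemma preserves_rel_Inf_le: "preserves_rel Inf' le"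
  unfolding preserves_rel_def
proof (intro allI impI Inf_greatest)
  fix M x assume M: "\<forall>p\<in>M. le (fst p) (snd p)" and "x \<in> snd ` M"
  then obtain p where p: "p \<in> M" "x = snd p" by blast
  then have "le (Inf' (fst ` M)) (fst p)" by (intro Inf_lower) simp
  with M p show "le (Inf' (fst ` M)) x" by (blast intro: trans)
qed

(* Grouping the pairs by their first component reduces arbitrary families to families indexed by
   the carrier itself, the only ones the hypothesis (like the class axioms) speaks about. *)
lemma preserves_relI:
  assumes R_Sup: "\<And>F G (I :: 'a set). (\<And>i. i \<in> I \<Longrightarrow> R (F i) (G i)) \<Longrightarrow> R (Sup' (F ` I)) (Sup' (G ` I))"
  shows "preserves_rel Sup' R"
  unfolding preserves_rel_def
proof (intro allI impI)
  fix M assume M: "\<forall>p\<in>M. R (fst p) (snd p)"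
  define B where "B a = snd ` {p \<in> M. fst p = a}" for a
  have "R a (Sup' (B a))" if "a \<in> fst ` M" for a
  proof -
    have "B a \<noteq> {}" using that by (auto simp: B_def)
    then have "Sup' ((\<lambda>_. a) ` B a) = a" by (auto simp: image_constant Sup_singleton)
    moreover have "R (Sup' ((\<lambda>_. a) ` B a)) (Sup' ((\<lambda>b. b) ` B a))"
      by (rule R_Sup) (use M in \<open>auto simp: B_def\<close>)
    ultimately show ?thesis by simp
  qed
  then have "R (Sup' ((\<lambda>a. a) ` fst ` M)) (Sup' ((\<lambda>a. Sup' (B a)) ` fst ` M))"
    by (rule R_Sup)
  moreover have "(\<Union>a\<in>fst ` M. B a) = snd ` M" by (auto simp: B_def)
  ultimately show "R (Sup' (fst ` M)) (Sup' (snd ` M))" by (simp add: Sup_UNION[symmetric])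
qed

lemma rel_lfp_lowerbound: "le (f x) x \<Longrightarrow> le (rel_lfp le Inf' f) x"
  unfolding rel_lfp_def by (rule Inf_lower) simp

lemma rel_lfp_fixpoint:
  assumes "monotone le le f"
  shows "f (rel_lfp le Inf' f) = rel_lfp le Inf' f"
proof -
  have below: "le (f (rel_lfp le Inf' f)) (rel_lfp le Inf' f)"
    unfolding rel_lfp_def
  proof (rule Inf_greatest)
    fix x assume x: "x \<in> {x. le (f x) x}"
    then have "le (f (Inf' {x. le (f x) x})) (f x)" by (intro monotoneD[OF assms] Inf_lower)
    with x show "le (f (Inf' {x. le (f x) x})) x" by (blast intro: trans)
  qed
  then have "le (rel_lfp le Inf' f) (f (rel_lfp le Inf' f))"
    by (intro rel_lfp_lowerbound monotoneD[OF assms])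
  with below show ?thesis by (rule antisym)
qed

lemma least_fp_eq_rel_lfp:
  assumes "monotone le le f"
  shows "least_fp le f = rel_lfp le Inf' f"
proof (rule least_fp_eqI)
  show "f (rel_lfp le Inf' f) = rel_lfp le Inf' f" using assms by (rule rel_lfp_fixpoint)
  show "le (rel_lfp le Inf' f) y" if "f y = y" for y
    by (rule rel_lfp_lowerbound) (simp add: that refl)
qed (rule antisym)

(* Parallel fixpoint induction: the R-related pairs below the two least fixpoints have an R-related
   supremum, which is a pair of prefixpoints of f and g and hence the pair of least fixpoints. *)
lemma least_fp_transfer:
  assumes f: "monotone le le f" and g: "monotone le le g"
    and step: "\<And>x y. R x y \<Longrightarrow> R (f x) (g y)" and R: "preserves_rel Sup' R"
  shows "R (least_fp le f) (least_fp le g)"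
proof -
  define X Y where "X = rel_lfp le Inf' f" and "Y = rel_lfp le Inf' g"
  define M where "M = {p. le (fst p) X \<and> le (snd p) Y \<and> R (fst p) (snd p)}"
  define x y where "x = Sup' (fst ` M)" and "y = Sup' (snd ` M)"
  have "R x y" unfolding x_def y_def by (rule preserves_relD[OF R]) (simp add: M_def)
  have "le x X" "le y Y" unfolding x_def y_def by (auto intro: Sup_least simp: M_def)
  then have "le (f x) X" "le (g y) Y"
    using monotoneD[OF f] monotoneD[OF g] rel_lfp_fixpoint[OF f] rel_lfp_fixpoint[OF g]
    unfolding X_def Y_def by metis+
  with step[OF \<open>R x y\<close>] have "(f x, g y) \<in> M" by (simp add: M_def)
  then have "f x \<in> fst ` M" "g y \<in> snd ` M" by force+
  then have "le (f x) x" "le (g y) y" unfolding x_def y_def by (simp_all add: Sup_upper)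
  then have "X = x" "Y = y"
    using \<open>le x X\<close> \<open>le y Y\<close> unfolding X_def Y_def by (auto intro: antisym rel_lfp_lowerbound)
  with \<open>R x y\<close> show ?thesis by (simp add: X_def Y_def least_fp_eq_rel_lfp f g)
qed

end

lemma rel_complete_lattice_dual:
  assumes "rel_complete_lattice le Inf' Sup'"
  shows "rel_complete_lattice (\<lambda>x y. le y x) Sup' Inf'"
proof -
  interpret rel_complete_lattice le Inf' Sup' by (fact assms)
  show ?thesis
    by unfold_locales
      (auto intro: refl antisym Inf_lower Inf_greatest Sup_upper Sup_least dest: trans)
qed

lemma rel_complete_lattice_order:
  "rel_complete_lattice (\<le>) (Inf :: 'a::complete_lattice set \<Rightarrow> 'a) Sup"
  by unfold_locales (auto intro: Inf_lower Inf_greatest Sup_upper Sup_least)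

lemma preserves_rel_Sup_le: "preserves_rel Sup ((\<le>) :: 'a::complete_lattice \<Rightarrow> _)"
  by (rule rel_complete_lattice.preserves_rel_Sup_le[OF rel_complete_lattice_order])

lemma preserves_rel_Inf_le: "preserves_rel Inf ((\<le>) :: 'a::complete_lattice \<Rightarrow> _)"
  by (rule rel_complete_lattice.preserves_rel_Inf_le[OF rel_complete_lattice_order])

lemma mono_comp_antimono: "antimono f \<Longrightarrow> mono (f \<circ> f)"
  by (intro monoI) (simp add: antimonoD)

lemma antimono_apply_lfp_comp:
  fixes f :: "'a::complete_lattice \<Rightarrow> 'a"
  assumes "antimono f"
  shows "f (lfp (f \<circ> f)) = gfp (f \<circ> f)" and "f (gfp (f \<circ> f)) = lfp (f \<circ> f)"
proof -
  note mono = mono_comp_antimono[OF assms]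
  define a b where "a = lfp (f \<circ> f)" and "b = gfp (f \<circ> f)"
  have a: "f (f a) = a" and b: "f (f b) = b"
    using lfp_fixpoint[OF mono] gfp_fixpoint[OF mono] by (simp_all add: a_def b_def)
  have "f a \<le> b" unfolding b_def by (rule gfp_upperbound) (simp add: a)
  moreover have "a \<le> f b" unfolding a_def by (rule lfp_lowerbound) (simp add: b)
  ultimately have "b \<le> f a" and "f b \<le> a"
    using antimonoD[OF assms] a b by metis+
  with \<open>f a \<le> b\<close> \<open>a \<le> f b\<close> show "f a = b" and "f b = a" by (simp_all add: order.antisym)
qed

lemma least_fp_le_eq_lfp: "mono f \<Longrightarrow> least_fp (\<le>) f = lfp f"
  by (rule least_fp_eqI) (auto simp: lfp_fixpoint intro: lfp_lowerbound order.antisym)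

lemma greatest_fp_le_eq_gfp: "mono f \<Longrightarrow> greatest_fp (\<le>) f = gfp f"
  unfolding greatest_fp_eq_least_fp
  by (rule least_fp_eqI) (auto simp: gfp_fixpoint intro: gfp_upperbound order.antisym)

lemma rel_complete_lattice_kle:
  "rel_complete_lattice (kle :: 'a::complete_interlaced_bilattice \<Rightarrow> _) kInf kSup"
  by unfold_locales (auto intro: kle_refl kle_antisym kInf_lower kInf_greatest kSup_upper kSup_least
      dest: kle_trans)

lemma kmeet_kmono:
  "kle x (x' :: 'a::complete_interlaced_bilattice) \<Longrightarrow> kle y y' \<Longrightarrow> kle (kmeet x y) (kmeet x' y')"
  by (meson kle_trans kmeet_greatest kmeet_lower1 kmeet_lower2)

lemma kjoin_kmono:
  "kle x (x' :: 'a::complete_interlaced_bilattice) \<Longrightarrow> kle y y' \<Longrightarrow> kle (kjoin x y) (kjoin x' y')"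
  by (meson kle_trans kjoin_least kjoin_upper1 kjoin_upper2)

lemma preserves_rel_Sup_kle: "preserves_rel Sup (kle :: 'a::complete_interlaced_bilattice \<Rightarrow> _)"
  by (rule rel_complete_lattice.preserves_relI[OF rel_complete_lattice_order]) (rule Sup_kmono)

lemma preserves_rel_Inf_kle: "preserves_rel Inf (kle :: 'a::complete_interlaced_bilattice \<Rightarrow> _)"
  using rel_complete_lattice_dual[OF rel_complete_lattice_order]
  by (rule rel_complete_lattice.preserves_relI) (rule Inf_kmono)

lemma preserves_rel_kSup_le: "preserves_rel kSup ((\<le>) :: 'a::complete_interlaced_bilattice \<Rightarrow> _)"
  by (rule rel_complete_lattice.preserves_relI[OF rel_complete_lattice_kle]) (rule kSup_tmono)

lemma preserves_rel_kInf_le: "preserves_rel kInf ((\<le>) :: 'a::complete_interlaced_bilattice \<Rightarrow> _)"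
  using rel_complete_lattice_dual[OF rel_complete_lattice_kle]
  by (rule rel_complete_lattice.preserves_relI) (rule kInf_tmono)

lemma preserves_rel_kSup_kle: "preserves_rel kSup (kle :: 'a::complete_interlaced_bilattice \<Rightarrow> _)"
  by (rule rel_complete_lattice.preserves_rel_Sup_le[OF rel_complete_lattice_kle])

lemma preserves_rel_kInf_kle: "preserves_rel kInf (kle :: 'a::complete_interlaced_bilattice \<Rightarrow> _)"
  by (rule rel_complete_lattice.preserves_rel_Inf_le[OF rel_complete_lattice_kle])

lemma kmeet_idem: "kmeet x x = (x :: 'a::complete_interlaced_bilattice)"
  by (meson kle_antisym kle_refl kmeet_greatest kmeet_lower1)

lemma kjoin_idem: "kjoin x x = (x :: 'a::complete_interlaced_bilattice)"
  by (meson kle_antisym kle_refl kjoin_least kjoin_upper1)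

lemma kmeet_between:
  fixes a b :: "'a::complete_interlaced_bilattice"
  assumes "a \<le> b"
  shows "a \<le> kmeet a b" and "kmeet a b \<le> b"
  using kmeet_tmono[OF order_refl assms, of a] kmeet_tmono[OF assms order_refl, of b]
  by (simp_all add: kmeet_idem)

lemma kjoin_between:
  fixes a b :: "'a::complete_interlaced_bilattice"
  assumes "a \<le> b"
  shows "a \<le> kjoin a b" and "kjoin a b \<le> b"
  using kjoin_tmono[OF order_refl assms, of a] kjoin_tmono[OF assms order_refl, of b]
  by (simp_all add: kjoin_idem)

lemmas [trans] = kle_trans

lemma kmeet_kle_if_between:
  fixes a b :: "'a::complete_interlaced_bilattice"
  assumes "a \<le> y" and "y \<le> b"
  shows "kle (kmeet a b) y"
proof -
  define u where "u = kmeet a b"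
  have "u = inf u (sup u y)" by simp
  also have "kle \<dots> (inf (kjoin (sup u y) u) (kjoin (sup u y) y))"
    by (intro inf_kmono kjoin_upper1 kjoin_upper2)
  also have "\<dots> = kjoin (sup u y) (inf u y)" by (simp add: kjoin_inf_distr)
  also have "kle \<dots> y"
  proof (rule kjoin_least)
    have "kle (sup u y) (sup a y)" unfolding u_def by (intro sup_kmono kmeet_lower1 kle_refl)
    then show "kle (sup u y) y" using assms(1) by (simp add: sup_absorb2)
    have "kle (inf u y) (inf b y)" unfolding u_def by (intro inf_kmono kmeet_lower2 kle_refl)
    then show "kle (inf u y) y" using assms(2) by (simp add: inf_absorb2)
  qed
  finally show ?thesis unfolding u_def .
qed

lemma kle_kjoin_if_between:
  fixes a b :: "'a::complete_interlaced_bilattice"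
  assumes "a \<le> y" and "y \<le> b"
  shows "kle y (kjoin a b)"
proof -
  define u where "u = kjoin a b"
  have "kle y (kmeet (sup u y) (inf u y))"
  proof (rule kmeet_greatest)
    have "kle (sup a y) (sup u y)" unfolding u_def by (intro sup_kmono kjoin_upper1 kle_refl)
    then show "kle y (sup u y)" using assms(1) by (simp add: sup_absorb2)
    have "kle (inf b y) (inf u y)" unfolding u_def by (intro inf_kmono kjoin_upper2 kle_refl)
    then show "kle y (inf u y)" using assms(2) by (simp add: inf_absorb2)
  qed
  also have "\<dots> = inf (kmeet (sup u y) u) (kmeet (sup u y) y)" by (simp add: kmeet_inf_distr)
  also have "kle \<dots> (inf u (sup u y))"
    by (intro inf_kmono kmeet_lower1 kmeet_lower2)
  also have "\<dots> = u" by simp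
  finally show ?thesis unfolding u_def .
qed

lemma inf_kmeet_kjoin:
  fixes a b :: "'a::complete_interlaced_bilattice"
  assumes "a \<le> b"
  shows "inf (kmeet a b) (kjoin a b) = a"
proof -
  have "inf (kmeet a b) (kjoin a b) = kjoin (inf (kmeet a b) a) (inf (kmeet a b) b)"
    by (rule inf_kjoin_distr)
  also have "\<dots> = kjoin a (kmeet a b)"
    using kmeet_between[OF assms] by (simp add: inf_absorb1 inf_absorb2)
  also have "\<dots> = a" by (meson kle_antisym kle_refl kjoin_least kjoin_upper1 kmeet_lower1)
  finally show ?thesis .
qed

lemma sup_kmeet_kjoin:
  fixes a b :: "'a::complete_interlaced_bilattice"
  assumes "a \<le> b"
  shows "sup (kmeet a b) (kjoin a b) = b"
proof -
  have "sup (kmeet a b) (kjoin a b) = kjoin (sup (kmeet a b) a) (sup (kmeet a b) b)"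
    by (rule sup_kjoin_distr)
  also have "\<dots> = kjoin (kmeet a b) b"
    using kmeet_between[OF assms] by (simp add: sup_absorb1 sup_absorb2)
  also have "\<dots> = b" by (meson kle_antisym kle_refl kjoin_least kjoin_upper2 kmeet_lower2)
  finally show ?thesis .
qed

lemma least_fp_kle_eq_kmeet:
  fixes f :: "'a::complete_interlaced_bilattice \<Rightarrow> 'a"
  assumes kmono: "monotone kle kle f" and antimono: "antimono f"
  shows "least_fp kle f = kmeet (lfp (f \<circ> f)) (gfp (f \<circ> f))"
proof -
  define a b where "a = lfp (f \<circ> f)" and "b = gfp (f \<circ> f)"
  have fa: "f a = b" and fb: "f b = a"
    unfolding a_def b_def using antimono by (rule antimono_apply_lfp_comp)+
  have ab: "a \<le> b"
    unfolding a_def b_def using mono_comp_antimono[OF antimono] by (rule lfp_le_gfp)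
  show ?thesis unfolding a_def[symmetric] b_def[symmetric]
  proof (rule least_fp_eqI)
    show "f (kmeet a b) = kmeet a b"
    proof (rule kle_antisym)
      have "kle (f (kmeet a b)) b"
        using monotoneD[OF kmono kmeet_lower1[of a b]] by (simp only: fa)
      moreover have "kle (f (kmeet a b)) a"
        using monotoneD[OF kmono kmeet_lower2[of a b]] by (simp only: fb)
      ultimately show "kle (f (kmeet a b)) (kmeet a b)" by (intro kmeet_greatest)
      have "a \<le> f (kmeet a b)"
        using antimonoD[OF antimono kmeet_between(2)[OF ab]] by (simp only: fb)
      moreover have "f (kmeet a b) \<le> b"
        using antimonoD[OF antimono kmeet_between(1)[OF ab]] by (simp only: fa)
      ultimately show "kle (kmeet a b) (f (kmeet a b))" by (rule kmeet_kle_if_between)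
    qed
    show "kle (kmeet a b) y" if "f y = y" for y
      using that unfolding a_def b_def
      by (auto intro!: kmeet_kle_if_between lfp_lowerbound gfp_upperbound)
  qed (rule kle_antisym)
qed

lemma greatest_fp_kle_eq_kjoin:
  fixes f :: "'a::complete_interlaced_bilattice \<Rightarrow> 'a"
  assumes kmono: "monotone kle kle f" and antimono: "antimono f"
  shows "greatest_fp kle f = kjoin (lfp (f \<circ> f)) (gfp (f \<circ> f))"
proof -
  define a b where "a = lfp (f \<circ> f)" and "b = gfp (f \<circ> f)"
  have fa: "f a = b" and fb: "f b = a"
    unfolding a_def b_def using antimono by (rule antimono_apply_lfp_comp)+
  have ab: "a \<le> b"
    unfolding a_def b_def using mono_comp_antimono[OF antimono] by (rule lfp_le_gfp)
  show ?thesis unfolding a_def[symmetric] b_def[symmetric] greatest_fp_eq_least_fp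
  proof (rule least_fp_eqI)
    show "f (kjoin a b) = kjoin a b"
    proof (rule kle_antisym)
      have "kle b (f (kjoin a b))"
        using monotoneD[OF kmono kjoin_upper1[of a b]] by (simp only: fa)
      moreover have "kle a (f (kjoin a b))"
        using monotoneD[OF kmono kjoin_upper2[of b a]] by (simp only: fb)
      ultimately show "kle (kjoin a b) (f (kjoin a b))" by (intro kjoin_least)
      have "a \<le> f (kjoin a b)"
        using antimonoD[OF antimono kjoin_between(2)[OF ab]] by (simp only: fb)
      moreover have "f (kjoin a b) \<le> b"
        using antimonoD[OF antimono kjoin_between(1)[OF ab]] by (simp only: fa)
      ultimately show "kle (f (kjoin a b)) (kjoin a b)" by (rule kle_kjoin_if_between)
    qed
    show "kle y (kjoin a b)" if "f y = y" for y
      using that unfolding a_def b_def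
      by (auto intro!: kle_kjoin_if_between lfp_lowerbound gfp_upperbound)
  qed (rule kle_antisym)
qed

theorem fixpoints_kmono_antimono:
  fixes f :: "'a::complete_interlaced_bilattice \<Rightarrow> 'a"
  assumes kmono: "monotone kle kle f" and antimono: "antimono f"
  defines "kleast \<equiv> least_fp kle f" and "kgreatest \<equiv> greatest_fp kle f"
    and "tleast \<equiv> least_fp (\<le>) (f \<circ> f)" and "tgreatest \<equiv> greatest_fp (\<le>) (f \<circ> f)"
  shows "kleast = kmeet tleast tgreatest" and "kgreatest = kjoin tleast tgreatest"
    and "tleast = inf kleast kgreatest" and "tgreatest = sup kleast kgreatest"
proof -
  have "tleast = lfp (f \<circ> f)" "tgreatest = gfp (f \<circ> f)"
    unfolding tleast_def tgreatest_def using mono_comp_antimono[OF antimono]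
    by (simp_all add: least_fp_le_eq_lfp greatest_fp_le_eq_gfp)
  moreover have "tleast \<le> tgreatest"
    unfolding calculation using mono_comp_antimono[OF antimono] by (rule lfp_le_gfp)
  ultimately show "kleast = kmeet tleast tgreatest" "kgreatest = kjoin tleast tgreatest"
    and "tleast = inf kleast kgreatest" "tgreatest = sup kleast kgreatest"
    unfolding kleast_def kgreatest_def
    using least_fp_kle_eq_kmeet[OF kmono antimono] greatest_fp_kle_eq_kjoin[OF kmono antimono]
    by (simp_all add: inf_kmeet_kjoin sup_kmeet_kjoin)
qed

instantiation "fun" :: (type, complete_interlaced_bilattice) complete_interlaced_bilattice
begin

definition kle_fun :: "('a \<Rightarrow> 'b) \<Rightarrow> ('a \<Rightarrow> 'b) \<Rightarrow> bool" where
  "kle_fun v w \<longleftrightarrow> (\<forall>x. kle (v x) (w x))"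

definition kmeet_fun :: "('a \<Rightarrow> 'b) \<Rightarrow> ('a \<Rightarrow> 'b) \<Rightarrow> 'a \<Rightarrow> 'b" where
  "kmeet_fun v w = (\<lambda>x. kmeet (v x) (w x))"

definition kjoin_fun :: "('a \<Rightarrow> 'b) \<Rightarrow> ('a \<Rightarrow> 'b) \<Rightarrow> 'a \<Rightarrow> 'b" where
  "kjoin_fun v w = (\<lambda>x. kjoin (v x) (w x))"

definition kInf_fun :: "('a \<Rightarrow> 'b) set \<Rightarrow> 'a \<Rightarrow> 'b" where
  "kInf_fun S = (\<lambda>x. kInf ((\<lambda>v. v x) ` S))"

definition kSup_fun :: "('a \<Rightarrow> 'b) set \<Rightarrow> 'a \<Rightarrow> 'b" where
  "kSup_fun S = (\<lambda>x. kSup ((\<lambda>v. v x) ` S))"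

definition neg_fun :: "('a \<Rightarrow> 'b) \<Rightarrow> 'a \<Rightarrow> 'b" where
  "neg_fun v = (\<lambda>x. neg (v x))"

(* For the infinitary monotonicity axioms the pointwise families are indexed by functions, not by
   elements of 'b, hence the detour through preserves_relD. *)
instance
  by (standard;
      simp add: kle_fun_def kmeet_fun_def kjoin_fun_def kInf_fun_def kSup_fun_def neg_fun_def
      le_fun_def fun_eq_iff image_image neg_neg
      kle_refl kmeet_lower1 kmeet_lower2 kjoin_upper1 kjoin_upper2
      inf_Sup_distr inf_kInf_distr inf_kSup_distr sup_Inf_distr sup_kInf_distr
      sup_kSup_distr kmeet_Inf_distr kmeet_Sup_distr kmeet_kSup_distr kjoin_Inf_distr
      kjoin_Sup_distr kjoin_kInf_distr;
     (intro allI)?;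
     (rule inf_sup_distr inf_kmeet_distr inf_kjoin_distr sup_inf_distr sup_kmeet_distr
        sup_kjoin_distr kmeet_inf_distr kmeet_sup_distr kmeet_kjoin_distr kjoin_inf_distr
        kjoin_sup_distr kjoin_kmeet_distr
      | blast intro: kle_antisym kmeet_greatest kjoin_least kInf_lower kInf_greatest kSup_upper
          kSup_least inf_kmono sup_kmono kmeet_tmono kjoin_tmono neg_tanti neg_kmono
          preserves_relD[OF preserves_rel_Inf_kle] preserves_relD[OF preserves_rel_Sup_kle]
          preserves_relD[OF preserves_rel_kInf_le] preserves_relD[OF preserves_rel_kSup_le]
      | blast intro: kle_trans))

end

lemma vkle_eq_kle: "vkle = kle"
  by (simp add: fun_eq_iff vkle_def kle_fun_def)

lemma vkmeet_eq_kmeet: "vkmeet = kmeet"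
  by (simp add: fun_eq_iff vkmeet_def kmeet_fun_def)

lemma vkjoin_eq_kjoin: "vkjoin = kjoin"
  by (simp add: fun_eq_iff vkjoin_def kjoin_fun_def)

lemma cev_tmono: "v \<le> v' \<Longrightarrow> w' \<le> w \<Longrightarrow> cev v w \<sigma> \<phi> \<le> cev v' w' \<sigma> \<phi>"
proof (induction \<phi> arbitrary: \<sigma>)
  case (FEx x a) then show ?case by (auto intro!: SUP_mono')
next
  case (FAll x a) then show ?case by (auto intro!: INF_mono')
qed (auto simp: le_fun_def intro: neg_tanti inf_mono sup_mono le_infI1 le_infI2 le_supI1 le_supI2
    kmeet_tmono kjoin_tmono)

lemma cev_kmono: "kle v v' \<Longrightarrow> kle w w' \<Longrightarrow> kle (cev v w \<sigma> \<phi>) (cev v' w' \<sigma> \<phi>)"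
proof (induction \<phi> arbitrary: \<sigma>)
  case (FEx x a) then show ?case by (auto intro: preserves_relD[OF preserves_rel_Sup_kle])
next
  case (FAll x a) then show ?case by (auto intro: preserves_relD[OF preserves_rel_Inf_kle])
qed (auto simp: kle_fun_def intro: neg_kmono inf_kmono sup_kmono kmeet_kmono kjoin_kmono kle_refl)

lemma Psi_tmono: "x \<le> x' \<Longrightarrow> v' \<le> v \<Longrightarrow> Psi P m x v \<le> Psi P m x' v'"
  unfolding le_fun_def[of "Psi P m x v"] Psi_def
  by (auto simp: Let_def split: prod.splits intro: cev_tmono)

lemma Psi_kmono: "kle x x' \<Longrightarrow> kle v v' \<Longrightarrow> kle (Psi P m x v) (Psi P m x' v')"
  unfolding kle_fun_def[of "Psi P m x v"] Psi_def
  by (auto simp: Let_def kle_refl split: prod.splits intro: cev_kmono)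

lemma Psi'_transfer:
  fixes R :: "('p, 'f, 'b::complete_interlaced_bilattice) valuation \<Rightarrow> ('p, 'f, 'b) valuation
    \<Rightarrow> bool"
  assumes step: "\<And>x y. R x y \<Longrightarrow> R (Psi P m x v) (Psi P m y v')"
    and "preserves_rel Sup R" "preserves_rel Inf R" "preserves_rel kSup R" "preserves_rel kInf R"
  shows "R (Psi' P m v) (Psi' P m v')"
proof -
  note t_lattice = rel_complete_lattice_order and k_lattice = rel_complete_lattice_kle
  note transfer = rel_complete_lattice.least_fp_transfer[where R = R]
  have "monotone (\<le>) (\<le>) (\<lambda>x. Psi P m x u)" "monotone kle kle (\<lambda>x. Psi P m x u)" for u
    by (auto intro!: monotoneI Psi_tmono Psi_kmono kle_refl)
  (* According to m, Psi' P m v is the least fixpoint in the t-lattice, its dual, the k-lattice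
     or its dual, whose suprema are Sup, Inf, kSup and kInf respectively. *)
  then show ?thesis
    by (cases m) (simp_all only: Psi'.simps greatest_fp_eq_least_fp vkle_eq_kle,
      (rule transfer[OF t_lattice] transfer[OF rel_complete_lattice_dual[OF t_lattice]]
         transfer[OF k_lattice] transfer[OF rel_complete_lattice_dual[OF k_lattice]];
       use step assms in \<open>auto simp: monotone_def\<close>)+)
qed

lemma Psi'_kmono: "monotone kle kle (Psi' P m)"
proof (rule monotoneI)
  show "kle (Psi' P m v) (Psi' P m v')" if "kle v v'" for v v'
    by (rule Psi'_transfer) (use that in \<open>auto intro: Psi_kmono preserves_rel_Sup_kle
        preserves_rel_Inf_kle preserves_rel_kSup_kle preserves_rel_kInf_kle\<close>)
qed

lemma Psi'_antimono: "antimono (Psi' P m)"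
proof (rule antimonoI)
  show "Psi' P m v' \<le> Psi' P m v" if "v \<le> v'" for v v'
    by (rule Psi'_transfer) (use that in \<open>auto intro: Psi_tmono preserves_rel_Sup_le
        preserves_rel_Inf_le preserves_rel_kSup_le preserves_rel_kInf_le\<close>)
qed

theorem theorem3:
  fixes P :: "('p, 'f, 'b::complete_interlaced_bilattice) clause set"
    and m :: mode
  assumes "fitting_program P"
  shows "FixU P m = vkmeet (FixF P m) (FixT P m)
         \<and> FixI P m = vkjoin (FixF P m) (FixT P m)
         \<and> FixF P m = inf (FixU P m) (FixI P m)
         \<and> FixT P m = sup (FixU P m) (FixI P m)"
  unfolding FixU_def FixI_def FixF_def FixT_def vkle_eq_kle vkmeet_eq_kmeet vkjoin_eq_kjoin
  using fixpoints_kmono_antimono[OF Psi'_kmono Psi'_antimono] by blast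

end
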